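(* Let $n>30$ with $n\equiv 0\pmod 6$, and let $\mathcal{H}$ and $\Pi$ be as defined in the context. If $H,H'\in\mathcal{H}$ with $H\neq H'$, then $\Pi\cap H\cap H'=\emptyset$; that is, the subgroups in $\mathcal{H}$ partition $\Pi$.
   Context: $S_n$ is the symmetric group on $\{1,\dots,n\}$, $n\equiv 0\pmod 6$. Subgroup classes: $\mathcal{H}_{-1}$ is the set of stabilizers in $S_n$ of partitions of $\{1,\dots,n\}$ into two blocks of size $n/2$ (a stabilizer may swap the two blocks); $\mathcal{H}_0=\{A_n\}$; for $1\le i\le n/3-1$, $\mathcal{H}_i$ is the set of setwise stabilizers in $S_n$ of $i$-element subsets of $\{1,\dots,n\}$; $\mathcal{H}=\bigcup_{i=-1}^{n/3-1}\mathcal{H}_i$. Permutation classes (cycle lengths listed, all of which together account for all $n$ points): $\Pi_{-1}$ is the set of $n$-cycles; $\Pi_0$ is the set of products of two disjoint cycles of lengths $n/2-1$ and $n/2+1$ if $n/2$ is even, respectively $n/2-2$ and $n/2+2$ if $n/2$ is odd; $\Pi_1$ is the set of elements with exactly one fixed point and two further cycles of lengths $n/2-2$ and $n/2+1$; for odd $i$ with $3\le i\le n/3-1$, $\Pi_i$ is the set of products of three disjoint cycles of lengths $i$, $(n-i-1)/2$, $(n-i+1)/2$; for even $i$ with $2\le i\le n/3-1$ and $(n-i)/2$ odd, $\Pi_i$ consists of products of three disjoint cycles of lengths $i,(n-i)/2,(n-i)/2$; for even $i$ with $4\le i\le n/3-1$ and $(n-i)/2$ even, $\Pi_i$ consists of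 products of three disjoint cycles of lengths $i,(n-i)/2-1,(n-i)/2+1$; if $(n-2)/2$ is even, $\Pi_2$ consists of products of three disjoint cycles of lengths $2, n/2-4, n/2+2$. Finally $\Pi=\bigcup_{i=-1}^{n/3-1}\Pi_i$. *)

theory Defs
  imports "HOL-Combinatorics.Permutations" "HOL-Library.Multiset"
begin

definition Sym :: "nat \<Rightarrow> (nat \<Rightarrow> nat) set" where
  "Sym n = {p. p permutes {1..n}}"

definition Alt :: "nat \<Rightarrow> (nat \<Rightarrow> nat) set" where
  "Alt n = {p. p permutes {1..n} \<and> evenperm p}"

definition cyc :: "(nat \<Rightarrow> nat) \<Rightarrow> nat \<Rightarrow> nat set" where
  "cyc p x = {(p ^^ k) x | k. True}"

text \<open>Cycle type: multiset of the lengths of all cycles of p on {1..n},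
  fixed points counted as cycles of length 1.\<close>
definition cycle_type :: "nat \<Rightarrow> (nat \<Rightarrow> nat) \<Rightarrow> nat multiset" where
  "cycle_type n p = image_mset card (mset_set (cyc p ` {1..n}))"

definition Hm1 :: "nat \<Rightarrow> (nat \<Rightarrow> nat) set set" where
  "Hm1 n = {{p \<in> Sym n. (p ` A = A \<and> p ` B = B) \<or> (p ` A = B \<and> p ` B = A)} | A B.
              A \<union> B = {1..n} \<and> A \<inter> B = {} \<and> card A = n div 2 \<and> card B = n div 2}"

definition Hpos :: "nat \<Rightarrow> nat \<Rightarrow> (nat \<Rightarrow> nat) set set" where
  "Hpos n i = {{p \<in> Sym n. p ` S = S} | S. S \<subseteq> {1..n} \<and> card S = i}"

definition HH :: "nat \<Rightarrow> (nat \<Rightarrow> nat) set set" where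
  "HH n = Hm1 n \<union> {Alt n} \<union> (\<Union>i\<in>{1..n div 3 - 1}. Hpos n i)"

definition Pm1 :: "nat \<Rightarrow> (nat \<Rightarrow> nat) set" where
  "Pm1 n = {p \<in> Sym n. cycle_type n p = {#n#}}"

definition P0 :: "nat \<Rightarrow> (nat \<Rightarrow> nat) set" where
  "P0 n = {p \<in> Sym n. cycle_type n p =
     (if even (n div 2) then {#n div 2 - 1, n div 2 + 1#} else {#n div 2 - 2, n div 2 + 2#})}"

definition P1 :: "nat \<Rightarrow> (nat \<Rightarrow> nat) set" where
  "P1 n = {p \<in> Sym n. cycle_type n p = {#1, n div 2 - 2, n div 2 + 1#}}"

definition Pi_i :: "nat \<Rightarrow> nat \<Rightarrow> (nat \<Rightarrow> nat) set" where
  "Pi_i n i = {p \<in> Sym n.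
     (odd i \<and> 3 \<le> i \<and> cycle_type n p = {#i, (n - i - 1) div 2, (n - i + 1) div 2#})
   \<or> (even i \<and> 2 \<le> i \<and> odd ((n - i) div 2) \<and>
        cycle_type n p = {#i, (n - i) div 2, (n - i) div 2#})
   \<or> (even i \<and> 4 \<le> i \<and> even ((n - i) div 2) \<and>
        cycle_type n p = {#i, (n - i) div 2 - 1, (n - i) div 2 + 1#})
   \<or> (i = 2 \<and> even ((n - 2) div 2) \<and> cycle_type n p = {#2, n div 2 - 4, n div 2 + 2#})}"

definition PP :: "nat \<Rightarrow> (nat \<Rightarrow> nat) set" where
  "PP n = Pm1 n \<union> P0 n \<union> P1 n \<union> (\<Union>i\<in>{2..n div 3 - 1}. Pi_i n i)"

end

theory Submission
  imports Defs "HOL-Combinatorics.Cycles" "HOL-Combinatorics.Orbits"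
begin

text \<open>
  A set invariant under a permutation p is a union of cycles of p. Hence p stabilises a set of
  size i only if some of its cycle lengths add up to i, it can preserve the two halves of a
  partition of type (n/2, n/2) only if some cycle lengths add up to n/2, it can swap the two
  halves only if all its cycles have even length, and it lies in A_n iff n plus the number of
  cycles is even. For the cycle types in \<Pi> these constraints leave exactly one member of
  \<H> containing p: A_n if p has two cycles, the stabiliser of the short cycle if p has three
  cycles, and, for an n-cycle, the stabiliser of the partition into the two alternate halves of
  the cycle, which is the only partition an n-cycle can swap.
\<close>

lemma cyc_eq_orbit: "permutation p \<Longrightarrow> cyc p x = orbit p x"
  by (simp add: cyc_def orbit_altdef_permutation)

lemma orbit_eq_of_mem: "permutation p \<Longrightarrow> y \<in> orbit p x \<Longrightarrow> orbit p y = orbit p x"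
  by (metis cyclic_on_orbit' orbit_cyclic_eq3)

lemma orbit_subset_of_image_subset:
  assumes "p ` S \<subseteq> S" "x \<in> S" shows "orbit p x \<subseteq> S"
proof
  fix y assume "y \<in> orbit p x"
  then show "y \<in> S" by induct (use assms in auto)
qed

lemma Union_orbits:
  assumes "p permutes U" "finite U"
  shows "\<Union> (orbit p ` U) = U"
proof -
  have "permutation p" using assms by (auto simp: permutation_permutes)
  then show ?thesis
    using assms(1) by (auto dest: permutes_orbit_subset intro: permutation_self_in_orbit)
qed

lemma disjoint_orbits: "permutation p \<Longrightarrow> disjoint (orbit p ` U)"
  by (auto simp: pairwise_def disjnt_def dest: orbit_eq_of_mem)

lemma image_orbit: "permutation p \<Longrightarrow> p ` orbit p x = orbit p x"
  by (metis orbit_inverse permutation_orbit_step permutation_self_in_orbit)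

lemma evenperm_cycle_of_list:
  "distinct cs \<Longrightarrow> cs \<noteq> [] \<Longrightarrow>
    evenperm (cycle_of_list cs) \<longleftrightarrow> odd (length cs)"
proof (induct cs rule: cycle_of_list.induct)
  case (1 i j cs)
  have "evenperm (cycle_of_list (i # j # cs)) \<longleftrightarrow>
      (evenperm (transpose i j) \<longleftrightarrow> evenperm (cycle_of_list (j # cs)))"
    by (simp add: evenperm_comp permutation_swap_id permutation_of_cycle)
  moreover have "evenperm (cycle_of_list (j # cs)) \<longleftrightarrow> odd (length (j # cs))" using 1 by auto
  moreover have "i \<noteq> j" using 1(2) by auto
  ultimately show ?case by (simp only: evenperm_swap length_Cons even_Suc) simp
qed auto

lemma set_support_eq_orbit: "permutation p \<Longrightarrow> set (support p s) = orbit p s"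
  unfolding support_set orbit_altdef_permutation by blast

lemma perm_restrict_orbit_eq_cycle_of_list:
  assumes "permutation p"
  shows "perm_restrict p (orbit p s) = cycle_of_list (support p s)"
proof
  fix x
  have "p x = cycle_of_list (support p s) x" if "x \<in> orbit p s"
    using cycle_restrict[OF assms] that set_support_eq_orbit[OF assms] by blast
  moreover have "cycle_of_list (support p s) x = x" if "x \<notin> orbit p s"
    using id_outside_supp that set_support_eq_orbit[OF assms] by metis
  ultimately show "perm_restrict p (orbit p s) x = cycle_of_list (support p s) x"
    by (auto simp: perm_restrict_def)
qed

lemma evenperm_perm_restrict_orbit:
  assumes "permutation p"
  shows "evenperm (perm_restrict p (orbit p s)) \<longleftrightarrow> odd (card (orbit p s))"
proof -
  have distinct: "distinct (support p s)" by (rule cycle_of_permutation[OF assms])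
  have set: "set (support p s) = orbit p s" by (rule set_support_eq_orbit[OF assms])
  then have "support p s \<noteq> []" using orbit_nonempty by force
  then have "evenperm (cycle_of_list (support p s)) \<longleftrightarrow> odd (length (support p s))"
    by (rule evenperm_cycle_of_list[OF distinct])
  then show ?thesis
    unfolding perm_restrict_orbit_eq_cycle_of_list[OF assms] distinct_card[OF distinct, symmetric] set .
qed

lemma orbits_perm_restrict_diff_orbit:
  assumes p: "p permutes S" "finite S" and s: "s \<in> S"
  defines "C \<equiv> orbit p s"
  shows "orbit (perm_restrict p (S - C)) ` (S - C) = orbit p ` S - {C}"
proof -
  let ?q = "perm_restrict p (S - C)"
  have perm: "permutation p" using p by (auto simp: permutation_permutes)
  have q: "?q permutes (S - C)"
    using perm_restrict_diff_cyclic[OF p(1) cyclic_on_orbit[OF p]] by (simp add: C_def)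
  have "?q \<in> S - C \<rightarrow> S - C" using permutes_in_image[OF q] by blast
  then have agree: "orbit ?q y = orbit p y" if "y \<in> S - C" for y
    using orbit_cong0[OF that] by (simp add: perm_restrict_simps)
  have "y \<notin> C \<longleftrightarrow> orbit p y \<noteq> C" for y
    unfolding C_def using orbit_eq_of_mem[OF perm] permutation_self_in_orbit[OF perm] by metis
  then show ?thesis using agree by auto
qed

lemma evenperm_split_orbit:
  assumes p: "p permutes S" "finite S" and s: "s \<in> S"
  defines "C \<equiv> orbit p s"
  shows "evenperm p \<longleftrightarrow> (evenperm (perm_restrict p (S - C)) \<longleftrightarrow> odd (card C))"
proof -
  let ?q = "perm_restrict p (S - C)"
  have perm: "permutation p" using p by (auto simp: permutation_permutes)
  have cyclic: "cyclic_on p C" unfolding C_def by (rule cyclic_on_orbit[OF p])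
  have "C \<subseteq> S" unfolding C_def by (rule permutes_orbit_subset[OF p(1) s])
  then have "(S - C) \<inter> C = {}" "(S - C) \<union> C = S" by auto
  then have decomp: "?q \<circ> perm_restrict p C = p"
    using perm_restrict_comp[OF _ cyclic] perm_restrict_id[OF p(1)] by simp
  have "?q permutes (S - C)" by (rule perm_restrict_diff_cyclic[OF p(1) cyclic])
  then have "permutation ?q" using p(2) by (auto simp: permutation_permutes)
  moreover have "permutation (perm_restrict p C)"
    unfolding C_def perm_restrict_orbit_eq_cycle_of_list[OF perm] by (rule permutation_of_cycle)
  ultimately have "evenperm p \<longleftrightarrow> (evenperm ?q \<longleftrightarrow> evenperm (perm_restrict p C))"
    by (metis evenperm_comp decomp)
  then show ?thesis unfolding C_def evenperm_perm_restrict_orbit[OF perm] .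
qed

lemma evenperm_iff_card_orbits:
  assumes "p permutes S" "finite S"
  shows "evenperm p \<longleftrightarrow> even (card S + card (orbit p ` S))"
  using assms(2,1)
proof (induction S arbitrary: p rule: finite_psubset_induct)
  case (psubset S)
  show ?case
  proof (cases "S = {}")
    case True
    then show ?thesis using psubset.prems by (simp add: permutes_empty)
  next
    case False
    then obtain s where s: "s \<in> S" by blast
    define C where "C = orbit p s"
    define q where "q = perm_restrict p (S - C)"
    have perm: "permutation p" using psubset by (auto simp: permutation_permutes)
    have "C \<subseteq> S" unfolding C_def by (rule permutes_orbit_subset[OF psubset.prems s])
    have "s \<in> C" unfolding C_def by (rule permutation_self_in_orbit[OF perm])
    have q: "q permutes (S - C)"
      unfolding q_def C_def
      by (rule perm_restrict_diff_cyclic[OF psubset.prems cyclic_on_orbit[OF psubset.prems psubset.hyps]])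
    have "S - C \<subset> S" using \<open>s \<in> C\<close> s by blast
    then have IH: "evenperm q \<longleftrightarrow> even (card (S - C) + card (orbit q ` (S - C)))"
      using psubset.IH q by blast
    have "orbit q ` (S - C) = orbit p ` S - {C}"
      unfolding q_def C_def by (rule orbits_perm_restrict_diff_orbit[OF psubset.prems psubset.hyps s])
    then have "card (orbit p ` S) = Suc (card (orbit q ` (S - C)))"
      using card_Suc_Diff1[of "orbit p ` S" C] s psubset.hyps by (simp add: C_def)
    moreover have "card S = card C + card (S - C)"
      using \<open>C \<subseteq> S\<close> psubset.hyps by (simp add: card_Diff_subset card_mono finite_subset)
    moreover have "evenperm p \<longleftrightarrow> (evenperm q \<longleftrightarrow> odd (card C))"
      unfolding q_def C_def by (rule evenperm_split_orbit[OF psubset.prems psubset.hyps s])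
    ultimately show ?thesis using IH by auto
  qed
qed

lemma invariant_eq_Union_orbits:
  assumes "p permutes U" "finite U" "S \<subseteq> U" "p ` S \<subseteq> S"
  shows "S = \<Union>{C \<in> orbit p ` U. C \<subseteq> S}"
proof
  have perm: "permutation p" using assms(1,2) by (auto simp: permutation_permutes)
  show "S \<subseteq> \<Union>{C \<in> orbit p ` U. C \<subseteq> S}"
  proof
    fix x assume "x \<in> S"
    then have "orbit p x \<in> {C \<in> orbit p ` U. C \<subseteq> S}"
      using \<open>x \<in> S\<close> assms(3) orbit_subset_of_image_subset[OF assms(4)] by auto
    then show "x \<in> \<Union>{C \<in> orbit p ` U. C \<subseteq> S}"
      using permutation_self_in_orbit[OF perm] by blast
  qed
qed blast

lemma card_invariant_subset:
  assumes "p permutes U" "finite U" "S \<subseteq> U" "p ` S \<subseteq> S"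
  shows "card S = (\<Sum>C\<in>orbit p ` U. if C \<subseteq> S then card C else 0)"
proof -
  let ?O = "{C \<in> orbit p ` U. C \<subseteq> S}"
  have "permutation p" using assms(1,2) by (auto simp: permutation_permutes)
  then have "disjoint ?O" by (rule pairwise_subset[OF disjoint_orbits]) blast
  moreover have "finite C" if "C \<in> ?O" for C
    using that assms(2,3) by (auto intro: finite_subset)
  ultimately have "card (\<Union>?O) = sum card ?O" by (rule card_Union_disjoint)
  also have "\<Union>?O = S" by (rule invariant_eq_Union_orbits[OF assms, symmetric])
  also have "sum card ?O = (\<Sum>C\<in>orbit p ` U. if C \<subseteq> S then card C else 0)"
    using assms(2) by (simp add: sum.inter_filter)
  finally show ?thesis .
qed

lemma even_card_orbit_of_swap:
  assumes p: "p permutes U" "finite U"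
    and AB: "A \<union> B = U" "A \<inter> B = {}" "p ` A = B" "p ` B = A" and C: "C \<in> orbit p ` U"
  shows "even (card C)"
proof -
  have "C \<subseteq> U" using C permutes_orbit_subset[OF p(1)] by blast
  then have finite: "finite C" and split: "C = (C \<inter> A) \<union> (C \<inter> B)"
    using p(2) AB(1) finite_subset by auto
  have inj: "inj p" by (rule permutes_inj[OF p(1)])
  obtain x where "C = orbit p x" using C by blast
  moreover have "permutation p" using p by (auto simp: permutation_permutes)
  ultimately have "p ` C = C" by (simp add: image_orbit)
  then have "p ` (C \<inter> A) = C \<inter> B" using AB(3) by (simp add: image_Int[OF inj])
  then have "card (C \<inter> B) = card (C \<inter> A)" by (metis card_image inj inj_on_subset subset_UNIV)
  moreover have "card C = card (C \<inter> A) + card (C \<inter> B)"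
    using card_Un_disjoint[of "C \<inter> A" "C \<inter> B"] finite AB(2) split by auto
  ultimately show ?thesis by simp
qed

lemma swap_partition_eq:
  assumes AB: "A \<union> B = U" "A \<inter> B = {}" "p ` A = B" "p ` B = A"
    and AB': "A' \<union> B' = U" "A' \<inter> B' = {}" "p ` A' = B'" "p ` B' = A'"
    and x: "x \<in> A" "x \<in> A'" and cyclic: "orbit p x = U"
  shows "A = A'" "B = B'"
proof -
  let ?D = "(A \<inter> A') \<union> (B \<inter> B')"
  have "p ` (A \<inter> A') \<subseteq> B \<inter> B'" "p ` (B \<inter> B') \<subseteq> A \<inter> A'"
    using AB(3,4) AB'(3,4) by auto
  then have "p ` ?D \<subseteq> ?D" by auto
  then have "U \<subseteq> ?D" using x cyclic orbit_subset_of_image_subset[of p ?D x] by blast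
  then show "A = A'" "B = B'" using AB(1,2) AB'(1,2) by auto
qed

lemma swap_partition_unique:
  assumes cyclic: "\<And>x. x \<in> U \<Longrightarrow> orbit p x = U"
    and AB: "A \<union> B = U" "A \<inter> B = {}" "A \<noteq> {}" "p ` A = B" "p ` B = A"
    and AB': "A' \<union> B' = U" "A' \<inter> B' = {}" "p ` A' = B'" "p ` B' = A'"
  shows "{A, B} = {A', B'}"
proof -
  obtain x where x: "x \<in> A" using AB(3) by blast
  then have orbit: "orbit p x = U" using cyclic AB(1) by blast
  show ?thesis
  proof (cases "x \<in> A'")
    case True
    then show ?thesis using swap_partition_eq[OF AB(1,2,4,5) AB' x _ orbit] by simp
  next
    case False
    then have "x \<in> B'" using x AB(1) AB'(1) by blast
    moreover have "B' \<union> A' = U" "B' \<inter> A' = {}" using AB'(1,2) by blast+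
    ultimately show ?thesis using swap_partition_eq[OF AB(1,2,4,5) _ _ AB'(4,3) x _ orbit] by auto
  qed
qed

lemma image_mset_mset_set_eq_add_msetE:
  assumes "finite X" "image_mset f (mset_set X) = add_mset a M"
  obtains x where "x \<in> X" "f x = a" "image_mset f (mset_set (X - {x})) = M"
proof -
  have "a \<in># image_mset f (mset_set X)" using assms(2) by simp
  then obtain x where x: "x \<in> X" "f x = a" using assms(1) by auto
  then have "add_mset a (image_mset f (mset_set (X - {x}))) = add_mset a M"
    using assms mset_set.remove[OF assms(1) x(1)] by simp
  then show thesis using that x by simp
qed

lemma image_mset_mset_set_eq_singleE:
  assumes "finite X" "image_mset f (mset_set X) = {#a#}"
  obtains x where "X = {x}" "f x = a"
proof -
  obtain x where "x \<in> X" "f x = a" "image_mset f (mset_set (X - {x})) = {#}"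
    using image_mset_mset_set_eq_add_msetE[OF assms] .
  moreover from this have "X - {x} = {}" using assms(1) by (simp add: mset_set_empty_iff)
  ultimately show thesis by (intro that[of x]) auto
qed

lemma image_mset_mset_set_eq_pairE:
  assumes "finite X" "image_mset f (mset_set X) = {#a, b#}"
  obtains x y where "X = {x, y}" "x \<noteq> y" "f x = a" "f y = b"
proof -
  obtain x where x: "x \<in> X" "f x = a" "image_mset f (mset_set (X - {x})) = {#b#}"
    using image_mset_mset_set_eq_add_msetE[OF assms] .
  moreover obtain y where "X - {x} = {y}" "f y = b"
    using image_mset_mset_set_eq_singleE[OF _ x(3)] assms(1) by auto
  ultimately show thesis by (intro that[of x y]) auto
qed

lemma image_mset_mset_set_eq_tripleE:
  assumes "finite X" "image_mset f (mset_set X) = {#a, b, c#}"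
  obtains x y z where "X = {x, y, z}" "x \<noteq> y" "x \<noteq> z" "y \<noteq> z" "f x = a" "f y = b" "f z = c"
proof -
  obtain x where x: "x \<in> X" "f x = a" "image_mset f (mset_set (X - {x})) = {#b, c#}"
    using image_mset_mset_set_eq_add_msetE[OF assms] .
  moreover obtain y z where "X - {x} = {y, z}" "y \<noteq> z" "f y = b" "f z = c"
    using image_mset_mset_set_eq_pairE[OF _ x(3)] assms(1) by auto
  ultimately show thesis by (intro that[of x y z]) auto
qed

lemma cycle_type_eq_orbits:
  assumes "p \<in> Sym n"
  shows "cycle_type n p = image_mset card (mset_set (orbit p ` {1..n}))"
proof -
  have "permutation p" using assms by (auto simp: Sym_def permutation_permutes)
  then have "cyc p ` {1..n} = orbit p ` {1..n}" by (simp add: cyc_eq_orbit)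
  then show ?thesis by (simp add: cycle_type_def)
qed

lemma sum_mset_cycle_type:
  assumes "p \<in> Sym n"
  shows "sum_mset (cycle_type n p) = n"
proof -
  have pU: "p permutes {1..n}" using assms by (simp add: Sym_def)
  have "n = (\<Sum>C\<in>orbit p ` {1..n}. if C \<subseteq> {1..n} then card C else 0)"
    using card_invariant_subset[OF pU finite_atLeastAtMost order_refl] permutes_image[OF pU] by simp
  also have "\<dots> = (\<Sum>C\<in>orbit p ` {1..n}. card C)"
    using permutes_orbit_subset[OF pU] by (intro sum.cong refl if_P) blast
  finally show ?thesis by (simp add: cycle_type_eq_orbits[OF assms] sum_unfold_sum_mset)
qed

lemma evenperm_iff_cycle_type:
  assumes "p \<in> Sym n"
  shows "evenperm p \<longleftrightarrow> even (n + size (cycle_type n p))"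
  using evenperm_iff_card_orbits[of p "{1..n}"] assms by (simp add: cycle_type_eq_orbits Sym_def)

lemma HH_memberE:
  assumes "H \<in> HH n" "p \<in> H"
  obtains (Alt) "H = Alt n" "evenperm p"
  | (Stabilizer) S where "H = {q \<in> Sym n. q ` S = S}" "S \<subseteq> {1..n}"
      "1 \<le> card S" "card S \<le> n div 3 - 1" "p ` S = S"
  | (Preserves) A B where "A \<union> B = {1..n}" "A \<inter> B = {}" "card A = n div 2" "p ` A = A"
  | (Swaps) A B where "H = {q \<in> Sym n. (q ` A = A \<and> q ` B = B) \<or> (q ` A = B \<and> q ` B = A)}"
      "A \<union> B = {1..n}" "A \<inter> B = {}" "card A = n div 2" "p ` A = B" "p ` B = A"
proof -
  from assms(1) consider "H \<in> Hm1 n" | "H = Alt n" | i where "i \<in> {1..n div 3 - 1}" "H \<in> Hpos n i"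
    unfolding HH_def by blast
  then show thesis
  proof cases
    case 1
    then obtain A B where H: "H = {q \<in> Sym n. (q ` A = A \<and> q ` B = B) \<or> (q ` A = B \<and> q ` B = A)}"
      and AB: "A \<union> B = {1..n}" "A \<inter> B = {}" "card A = n div 2"
      unfolding Hm1_def by blast
    from assms(2) have "(p ` A = A \<and> p ` B = B) \<or> (p ` A = B \<and> p ` B = A)" unfolding H by simp
    then show thesis
    proof
      assume "p ` A = A \<and> p ` B = B"
      then show thesis using Preserves[OF AB] by simp
    next
      assume "p ` A = B \<and> p ` B = A"
      then show thesis using Swaps[OF H AB] by simp
    qed
  next
    case 2
    then show thesis using assms(2) Alt by (simp add: Alt_def)
  next
    case 3
    then obtain S where "H = {q \<in> Sym n. q ` S = S}" "S \<subseteq> {1..n}" "card S = i"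
      unfolding Hpos_def by blast
    moreover have "p ` S = S" using assms(2) unfolding \<open>H = _\<close> by simp
    ultimately show thesis using 3(1) by (intro Stabilizer) auto
  qed
qed

lemma HH_eq_Alt_of_two_cycles:
  assumes p: "p \<in> Sym n" and ct: "cycle_type n p = {#a, b#}" and "odd a"
    and large: "n div 3 - 1 < a" "n div 3 - 1 < b" and not_half: "a \<noteq> n div 2" "b \<noteq> n div 2"
    and H: "H \<in> HH n" "p \<in> H"
  shows "H = Alt n"
proof -
  let ?U = "{1..n}"
  have pU: "p permutes ?U" using p by (simp add: Sym_def)
  have "image_mset card (mset_set (orbit p ` ?U)) = {#a, b#}"
    using ct by (simp only: cycle_type_eq_orbits[OF p])
  then obtain C1 C2 where orbits: "orbit p ` ?U = {C1, C2}" "C1 \<noteq> C2" "card C1 = a" "card C2 = b"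
    by (rule image_mset_mset_set_eq_pairE[OF finite_imageI[OF finite_atLeastAtMost]])
  have card_inv: "card S = (if C1 \<subseteq> S then a else 0) + (if C2 \<subseteq> S then b else 0)"
    if "S \<subseteq> ?U" "p ` S \<subseteq> S" for S
    using card_invariant_subset[OF pU _ that] orbits by simp
  have "C1 \<in> orbit p ` ?U" unfolding orbits(1) by simp
  have "n = a + b" using sum_mset_cycle_type[OF p] ct by simp
  from H show ?thesis
  proof (cases rule: HH_memberE)
    case (Stabilizer S)
    then have "card S = (if C1 \<subseteq> S then a else 0) + (if C2 \<subseteq> S then b else 0)"
      by (intro card_inv) auto
    then show ?thesis using Stabilizer(3,4) large by (simp split: if_splits)
  next
    case (Preserves A B)
    then have "card A = (if C1 \<subseteq> A then a else 0) + (if C2 \<subseteq> A then b else 0)"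
      by (intro card_inv) auto
    then show ?thesis using Preserves(3) large not_half \<open>n = a + b\<close> by (simp split: if_splits)
  next
    case (Swaps A B)
    have "even (card C1)"
      by (rule even_card_orbit_of_swap[OF pU _ Swaps(2,3,5,6) \<open>C1 \<in> orbit p ` ?U\<close>]) simp
    then show ?thesis using \<open>odd a\<close> orbits(3) by simp
  qed
qed

lemma HH_member_of_three_orbits:
  assumes p: "p \<in> Sym n"
    and orbits: "orbit p ` {1..n} = {C1, C2, C3}" "C1 \<noteq> C2" "C1 \<noteq> C3" "C2 \<noteq> C3"
    and card: "card C1 = a" "card C2 = b" "card C3 = c"
    and "even n" and odd: "odd a \<or> odd b \<or> odd c"
    and small: "1 \<le> a" "a \<le> n div 3 - 1" and large: "n div 3 - 1 < b" "n div 3 - 1 < c"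
    and not_half: "b \<noteq> n div 2" "c \<noteq> n div 2"
    and K: "K \<in> HH n" "p \<in> K"
  shows "K = {q \<in> Sym n. q ` C1 = C1}"
proof -
  let ?U = "{1..n}"
  have pU: "p permutes ?U" using p by (simp add: Sym_def)
  have members: "C1 \<in> orbit p ` ?U" "C2 \<in> orbit p ` ?U" "C3 \<in> orbit p ` ?U"
    unfolding orbits(1) by simp_all
  have "\<not> evenperm p" using evenperm_iff_card_orbits[OF pU] orbits \<open>even n\<close> by simp
  have card_inv: "card S = (if C1 \<subseteq> S then a else 0) + (if C2 \<subseteq> S then b else 0)
      + (if C3 \<subseteq> S then c else 0)" if "S \<subseteq> ?U" "p ` S \<subseteq> S" for S
    using card_invariant_subset[OF pU _ that] orbits card by simp
  have "n = a + b + c"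
    using sum_mset_cycle_type[OF p] orbits card by (simp add: cycle_type_eq_orbits[OF p])
  from K show ?thesis
  proof (cases rule: HH_memberE)
    case Alt
    then show ?thesis using \<open>\<not> evenperm p\<close> by simp
  next
    case (Stabilizer S)
    then have "card S = (if C1 \<subseteq> S then a else 0) + (if C2 \<subseteq> S then b else 0)
      + (if C3 \<subseteq> S then c else 0)" by (intro card_inv) auto
    then have "C1 \<subseteq> S" "\<not> C2 \<subseteq> S" "\<not> C3 \<subseteq> S"
      using Stabilizer(3,4) small large by (simp_all split: if_splits)
    then have "{C \<in> orbit p ` ?U. C \<subseteq> S} = {C1}" unfolding orbits(1) by auto
    moreover have "S = \<Union>{C \<in> orbit p ` ?U. C \<subseteq> S}"
      using Stabilizer(2,5) by (intro invariant_eq_Union_orbits[OF pU]) auto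
    ultimately show ?thesis using Stabilizer(1) by simp
  next
    case (Preserves A B)
    then have "card A = (if C1 \<subseteq> A then a else 0) + (if C2 \<subseteq> A then b else 0)
      + (if C3 \<subseteq> A then c else 0)" by (intro card_inv) auto
    moreover have "n = 2 * (n div 2)" "3 * (n div 3) \<le> n" using \<open>even n\<close> by simp_all
    then have "n div 2 \<notin> {0, a, b, c, a + b, a + c, b + c, a + b + c}"
      using small not_half \<open>n = a + b + c\<close> by auto
    ultimately show ?thesis using Preserves(3) by (simp split: if_splits)
  next
    case (Swaps A B)
    then have "even (card C1)" "even (card C2)" "even (card C3)"
      using even_card_orbit_of_swap[OF pU _ Swaps(2,3,5,6)] members by simp_all
    then show ?thesis using odd card by simp
  qed
qed

lemma HH_unique_of_three_cycles:
  assumes p: "p \<in> Sym n" and ct: "cycle_type n p = {#a, b, c#}"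
    and conds: "even n" "odd a \<or> odd b \<or> odd c" "1 \<le> a" "a \<le> n div 3 - 1" "n div 3 - 1 < b" "n div 3 - 1 < c" "b \<noteq> n div 2" "c \<noteq> n div 2"
    and H: "H \<in> HH n" "p \<in> H" and H': "H' \<in> HH n" "p \<in> H'"
  shows "H = H'"
proof -
  have "image_mset card (mset_set (orbit p ` {1..n})) = {#a, b, c#}"
    using ct by (simp only: cycle_type_eq_orbits[OF p])
  then obtain C1 C2 C3
    where orbits: "orbit p ` {1..n} = {C1, C2, C3}" "C1 \<noteq> C2" "C1 \<noteq> C3" "C2 \<noteq> C3"
      "card C1 = a" "card C2 = b" "card C3 = c"
    by (rule image_mset_mset_set_eq_tripleE[OF finite_imageI[OF finite_atLeastAtMost]])
  show ?thesis
    using HH_member_of_three_orbits[OF p orbits conds H]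
      HH_member_of_three_orbits[OF p orbits conds H'] by simp
qed

lemma orbit_eq_of_n_cycle:
  assumes p: "p \<in> Sym n" and ct: "cycle_type n p = {#n#}" and x: "x \<in> {1..n}"
  shows "orbit p x = {1..n}"
proof -
  let ?U = "{1..n}"
  have pU: "p permutes ?U" using p by (simp add: Sym_def)
  have "image_mset card (mset_set (orbit p ` ?U)) = {#n#}"
    using ct by (simp only: cycle_type_eq_orbits[OF p])
  then obtain C where orbits: "orbit p ` ?U = {C}"
    by (rule image_mset_mset_set_eq_singleE[OF finite_imageI[OF finite_atLeastAtMost]])
  have "C = ?U" using Union_orbits[OF pU finite_atLeastAtMost] unfolding orbits by simp
  then show ?thesis using x orbits by blast
qed

lemma HH_member_of_n_cycle:
  assumes p: "p \<in> Sym n" and ct: "cycle_type n p = {#n#}" and "even n" "n \<ge> 2"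
    and H: "H \<in> HH n" "p \<in> H"
  obtains A B where "H = {q \<in> Sym n. (q ` A = A \<and> q ` B = B) \<or> (q ` A = B \<and> q ` B = A)}"
    "A \<union> B = {1..n}" "A \<inter> B = {}" "A \<noteq> {}" "p ` A = B" "p ` B = A"
proof -
  let ?U = "{1..n}"
  have pU: "p permutes ?U" using p by (simp add: Sym_def)
  have "\<not> evenperm p" using evenperm_iff_cycle_type[OF p] ct \<open>even n\<close> by simp
  have "orbit p ` ?U = (\<lambda>_. ?U) ` ?U" using orbit_eq_of_n_cycle[OF p ct] by (rule image_cong[OF refl])
  also have "\<dots> = {?U}" using \<open>n \<ge> 2\<close> by (simp add: image_constant_conv)
  finally have "orbit p ` ?U = {?U}" .
  then have card_inv: "card S = (if S = ?U then n else 0)" if "S \<subseteq> ?U" "p ` S \<subseteq> S" for S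
    using card_invariant_subset[OF pU _ that] that(1) by auto
  from H show thesis
  proof (cases rule: HH_memberE)
    case Alt
    then show ?thesis using \<open>\<not> evenperm p\<close> by simp
  next
    case (Stabilizer S)
    then have "card S = (if S = ?U then n else 0)" by (intro card_inv) auto
    then show ?thesis using Stabilizer(3,4) by (simp split: if_splits)
  next
    case (Preserves A B)
    then have "card A = (if A = ?U then n else 0)" by (intro card_inv) auto
    then show ?thesis using Preserves(3) \<open>n \<ge> 2\<close> by (simp split: if_splits)
  next
    case (Swaps A B)
    moreover have "A \<noteq> {}" using Swaps(4) \<open>n \<ge> 2\<close> by auto
    ultimately show ?thesis using that by blast
  qed
qed

lemma HH_unique_of_n_cycle:
  assumes p: "p \<in> Sym n" "cycle_type n p = {#n#}" "even n" "n \<ge> 2"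
    and H: "H \<in> HH n" "p \<in> H" and H': "H' \<in> HH n" "p \<in> H'"
  shows "H = H'"
proof -
  obtain A B where H_eq: "H = {q \<in> Sym n. (q ` A = A \<and> q ` B = B) \<or> (q ` A = B \<and> q ` B = A)}"
    and AB: "A \<union> B = {1..n}" "A \<inter> B = {}" "A \<noteq> {}" "p ` A = B" "p ` B = A"
    by (rule HH_member_of_n_cycle[OF p H])
  obtain A' B'
    where H'_eq: "H' = {q \<in> Sym n. (q ` A' = A' \<and> q ` B' = B') \<or> (q ` A' = B' \<and> q ` B' = A')}"
    and AB': "A' \<union> B' = {1..n}" "A' \<inter> B' = {}" "A' \<noteq> {}" "p ` A' = B'" "p ` B' = A'"
    by (rule HH_member_of_n_cycle[OF p H'])
  have "{A, B} = {A', B'}"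
    using swap_partition_unique[OF orbit_eq_of_n_cycle[OF p(1,2)] AB AB'(1,2,4,5)] .
  then show ?thesis unfolding H_eq H'_eq doubleton_eq_iff by blast
qed

lemma Pi_i_cycle_type:
  assumes n: "n = 6 * k" "6 \<le> k" and i: "2 \<le> i" "i \<le> n div 3 - 1" and p: "p \<in> Pi_i n i"
  obtains a b c where "cycle_type n p = {#a, b, c#}" "odd a \<or> odd b \<or> odd c"
    "1 \<le> a" "a \<le> n div 3 - 1" "n div 3 - 1 < b" "n div 3 - 1 < c" "b \<noteq> n div 2" "c \<noteq> n div 2"
proof -
  have third: "n div 3 - 1 = 2 * k - 1" and half: "n div 2 = 3 * k" using n by simp_all
  from p consider
      "odd i" "cycle_type n p = {#i, (n - i - 1) div 2, (n - i + 1) div 2#}"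
    | "even i" "odd ((n - i) div 2)" "cycle_type n p = {#i, (n - i) div 2, (n - i) div 2#}"
    | "even i" "4 \<le> i" "even ((n - i) div 2)"
        "cycle_type n p = {#i, (n - i) div 2 - 1, (n - i) div 2 + 1#}"
    | "i = 2" "even ((n - 2) div 2)" "cycle_type n p = {#2, n div 2 - 4, n div 2 + 2#}"
    unfolding Pi_i_def by blast
  then show thesis
  proof cases
    case 1
    then obtain j where j: "i = 2 * j + 1" by (blast elim: oddE)
    then have "n - i - 1 = 2 * (3 * k - j - 1)" "n - i + 1 = 2 * (3 * k - j)" using n i by simp_all
    then show thesis by (intro that[of i "3 * k - j - 1" "3 * k - j"]) (use 1 n i j third half in simp_all)
  next
    case 2
    then obtain j where j: "i = 2 * j" by (blast elim: evenE)
    then have "n - i = 2 * (3 * k - j)" using n i by simp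
    then show thesis
      by (intro that[of i "(n - i) div 2" "(n - i) div 2"]) (use 2 n i j third half in simp_all)
  next
    case 3
    then obtain j where j: "i = 2 * j" by (blast elim: evenE)
    then have m: "(n - i) div 2 = 3 * k - j" using n i by simp
    then have "even (3 * k - j)" using 3(3) by simp
    then obtain r where "3 * k - j = 2 * r" by (rule evenE)
    then have odd: "odd ((n - i) div 2 - 1)" using m n i j by simp
    show thesis
      by (intro that[of i "(n - i) div 2 - 1" "(n - i) div 2 + 1"]) (use 3 odd m n i j third half in simp_all)
  next
    case 4
    have m: "(n - 2) div 2 = 3 * k - 1" using n by simp
    then have "even (3 * k - 1)" using 4(2) by simp
    then obtain r where "3 * k - 1 = 2 * r" by (rule evenE)
    then have "n div 2 - 4 = 2 * (r - 2) + 1" using half n by simp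
    then have odd: "odd (n div 2 - 4)" by simp
    show thesis
      by (intro that[of 2 "n div 2 - 4" "n div 2 + 2"]) (use 4 odd n third half in simp_all)
  qed
qed

lemma PP_subset_Sym: "PP n \<subseteq> Sym n"
  by (auto simp: PP_def Pm1_def P0_def P1_def Pi_i_def)

lemma PP_cycle_type_cases:
  assumes n: "n > 30" "n mod 6 = 0" and p: "p \<in> PP n"
  obtains (n_cycle) "cycle_type n p = {#n#}"
  | (two_cycles) a b where "cycle_type n p = {#a, b#}" "odd a"
      "n div 3 - 1 < a" "n div 3 - 1 < b" "a \<noteq> n div 2" "b \<noteq> n div 2"
  | (three_cycles) a b c where "cycle_type n p = {#a, b, c#}" "odd a \<or> odd b \<or> odd c"
      "1 \<le> a" "a \<le> n div 3 - 1" "n div 3 - 1 < b" "n div 3 - 1 < c" "b \<noteq> n div 2" "c \<noteq> n div 2"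
proof -
  define k where "k = n div 6"
  have k: "n = 6 * k" "6 \<le> k" using n by (auto simp: k_def)
  have third: "n div 3 - 1 = 2 * k - 1" and half: "n div 2 = 3 * k" using k by simp_all
  from p consider "p \<in> Pm1 n" | "p \<in> P0 n" | "p \<in> P1 n"
    | i where "i \<in> {2..n div 3 - 1}" "p \<in> Pi_i n i"
    unfolding PP_def by blast
  then show thesis
  proof cases
    case 1
    then show thesis using n_cycle by (simp add: Pm1_def)
  next
    case 2
    show thesis
    proof (cases "even (3 * k)")
      case True
      then obtain r where "3 * k = 2 * r" by (rule evenE)
      then have "odd (3 * k - 1)" using k by simp
      then show thesis
        by (intro two_cycles[of "3 * k - 1" "3 * k + 1"])
          (use 2 True k third half in \<open>simp_all add: P0_def\<close>)
    next
      case False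
      then show thesis
        by (intro two_cycles[of "3 * k - 2" "3 * k + 2"])
          (use 2 False k third half in \<open>simp_all add: P0_def\<close>)
    qed
  next
    case 3
    show thesis
      by (intro three_cycles[of 1 "3 * k - 2" "3 * k + 1"])
        (use 3 k third half in \<open>simp_all add: P1_def\<close>)
  next
    case 4
    then show thesis using Pi_i_cycle_type[OF k] three_cycles by auto
  qed
qed

theorem lemma3p7:
  fixes n :: nat and H H' :: "(nat \<Rightarrow> nat) set"
  assumes "n > 30" and "n mod 6 = 0"
    and "H \<in> HH n" and "H' \<in> HH n" and "H \<noteq> H'"
  shows "PP n \<inter> H \<inter> H' = {}"
proof -
  have "even n" "n \<ge> 2" using assms(1,2) by presburger+
  have "H = H'" if p: "p \<in> PP n" "p \<in> H" "p \<in> H'" for p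
  proof -
    have Sym: "p \<in> Sym n" using p(1) PP_subset_Sym by blast
    from assms(1,2) p(1) show ?thesis
    proof (cases rule: PP_cycle_type_cases)
      case n_cycle
      show ?thesis
        by (rule HH_unique_of_n_cycle[OF Sym n_cycle \<open>even n\<close> \<open>n \<ge> 2\<close> assms(3) p(2) assms(4) p(3)])
    next
      case (two_cycles a b)
      show ?thesis
        using HH_eq_Alt_of_two_cycles[OF Sym two_cycles assms(3) p(2)]
          HH_eq_Alt_of_two_cycles[OF Sym two_cycles assms(4) p(3)] by simp
    next
      case (three_cycles a b c)
      show ?thesis
        by (rule HH_unique_of_three_cycles[OF Sym three_cycles(1) \<open>even n\<close> three_cycles(2-8)
              assms(3) p(2) assms(4) p(3)])
    qed
  qed
  then show ?thesis using assms(5) by blast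
qed

end
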